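(* Let $\boldsymbol\mu=(\mu_0,\dots,\mu_K)\in\mathcal L$ be a single-population instance in which every arm $a$ has distribution $\mathcal N(\mu_a,\sigma^2)$ with known variance $\sigma^2>0$, arm $0$ being the control. Define $\widetilde{\boldsymbol\mu}$ by $\widetilde\mu_k=2\mu_0-\mu_k$ if $\mu_k>\mu_0$ and $\widetilde\mu_k=\mu_k$ otherwise ($k=0,\dots,K$). Then $T^\star(\boldsymbol\mu)=T^\star_{\mathrm{BAI}}(\widetilde{\boldsymbol\mu})$.
   Context: For Gaussian arms with variance $\sigma^2$, $d(x,y)=(x-y)^2/(2\sigma^2)$. $\Sigma_{K+1}$ is the probability simplex. $\mathcal S(\boldsymbol\mu)=\{a\in[K]:\mu_a>\mu_0\}$, $\mathcal L=\{\boldsymbol\mu\in\mathbb R^{K+1}:\mu_a\neq\mu_0\ \forall a\in[K]\}$, $\mathrm{Alt}(\boldsymbol\mu)=\{\boldsymbol\lambda\in\mathcal L:\mathcal S(\boldsymbol\lambda)\neq\mathcal S(\boldsymbol\mu)\}$, and the (all-arms-better-than-control) characteristic time is $T^\star(\boldsymbol\mu)^{-1}=\sup_{\mathbf w\in\Sigma_{K+1}}\inf_{\boldsymbol\lambda\in\mathrm{Alt}(\boldsymbol\mu)}\sum_{a=0}^Kw_a d(\mu_a,\lambda_a)$. For a vector $\boldsymbol\nu\in\mathbb R^{K+1}$ with a unique maximal coordinate, the best-arm-identification characteristic time is $T^\star_{\mathrm{BAI}}(\boldsymbol\nu)^{-1}=\sup_{\mathbf w\in\Sigma_{K+1}}\inf_{\boldsymbol\lambda\in\mathbb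 R^{K+1}:\ \operatorname{argmax}\boldsymbol\lambda\neq\operatorname{argmax}\boldsymbol\nu}\sum_{a=0}^Kw_a d(\nu_a,\lambda_a)$, where the infimum is over $\boldsymbol\lambda$ whose set of maximizing coordinates is not $\{\operatorname{argmax}\boldsymbol\nu\}$. *)

theory Defs
  imports "HOL-Analysis.Analysis" "HOL-Library.Extended_Real"
begin

(* Arms are indexed 0..K (arm 0 = control); instances are functions nat => real,
   only the coordinates 0..K matter. *)

definition gauss_kl :: "real \<Rightarrow> real \<Rightarrow> real \<Rightarrow> real" where
  "gauss_kl \<sigma> x y = (x - y)^2 / (2 * \<sigma>^2)"

definition prob_simplex :: "nat \<Rightarrow> (nat \<Rightarrow> real) set" where
  "prob_simplex K = {w. (\<forall>a\<in>{0..K}. 0 \<le> w a) \<and> (\<Sum>a=0..K. w a) = 1}"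

definition better_set :: "nat \<Rightarrow> (nat \<Rightarrow> real) \<Rightarrow> nat set" where
  "better_set K \<mu> = {a\<in>{1..K}. \<mu> a > \<mu> 0}"

definition in_L :: "nat \<Rightarrow> (nat \<Rightarrow> real) \<Rightarrow> bool" where
  "in_L K \<mu> \<longleftrightarrow> (\<forall>a\<in>{1..K}. \<mu> a \<noteq> \<mu> 0)"

definition Alt :: "nat \<Rightarrow> (nat \<Rightarrow> real) \<Rightarrow> (nat \<Rightarrow> real) set" where
  "Alt K \<mu> = {l. in_L K l \<and> better_set K l \<noteq> better_set K \<mu>}"

definition T_star :: "real \<Rightarrow> nat \<Rightarrow> (nat \<Rightarrow> real) \<Rightarrow> ereal" where
  "T_star \<sigma> K \<mu> = inverse (SUP w\<in>prob_simplex K. INF l\<in>Alt K \<mu>.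
       ereal (\<Sum>a=0..K. w a * gauss_kl \<sigma> (\<mu> a) (l a)))"

definition argmax_set :: "nat \<Rightarrow> (nat \<Rightarrow> real) \<Rightarrow> nat set" where
  "argmax_set K \<nu> = {a\<in>{0..K}. \<forall>b\<in>{0..K}. \<nu> b \<le> \<nu> a}"

definition Alt_BAI :: "nat \<Rightarrow> (nat \<Rightarrow> real) \<Rightarrow> (nat \<Rightarrow> real) set" where
  "Alt_BAI K \<nu> = {l. argmax_set K l \<noteq> argmax_set K \<nu>}"

definition T_star_BAI :: "real \<Rightarrow> nat \<Rightarrow> (nat \<Rightarrow> real) \<Rightarrow> ereal" where
  "T_star_BAI \<sigma> K \<nu> = inverse (SUP w\<in>prob_simplex K. INF l\<in>Alt_BAI K \<nu>.
       ereal (\<Sum>a=0..K. w a * gauss_kl \<sigma> (\<nu> a) (l a)))"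

definition mirror :: "(nat \<Rightarrow> real) \<Rightarrow> nat \<Rightarrow> real" where
  "mirror \<mu> k = (if \<mu> k > \<mu> 0 then 2 * \<mu> 0 - \<mu> k else \<mu> k)"

end

theory Submission
  imports Defs
begin

text \<open>For fixed weights, both inner infima split into two-arm problems, one per arm a,
involving only the control and arm a. An alternative to \<mu> must move some arm a to the
other side of the control, while an alternative to the BAI instance mirror \<mu>, whose
unique best arm is the control, must lift some arm a at least up to the control.
Reflecting the pair (\<lambda> 0, \<lambda> a) through \<mu> 0 when \<mu> a > \<mu> 0 turns one kind of two-arm
alternative into the other and leaves the Gaussian divergence unchanged. The remaining
difference, that alternatives in Alt may not tie with the control, disappears in the
infimum after a vanishing perturbation of \<lambda> 0.\<close>

lemma gauss_kl_nonneg: "0 \<le> gauss_kl \<sigma> x y"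
  by (simp add: gauss_kl_def)

lemma gauss_kl_reflect: "gauss_kl \<sigma> (2 * c - x) (2 * c - y) = gauss_kl \<sigma> x y"
  by (simp add: gauss_kl_def power2_commute)

lemma tendsto_gauss_kl:
  "(f \<longlongrightarrow> y) F \<Longrightarrow> ((\<lambda>t. gauss_kl \<sigma> x (f t)) \<longlongrightarrow> gauss_kl \<sigma> x y) F"
  unfolding gauss_kl_def divide_inverse by (intro tendsto_intros)

lemma sum_pair_le:
  fixes f :: "'a \<Rightarrow> 'b::ordered_comm_monoid_add"
  assumes "finite A" "i \<in> A" "j \<in> A" "i \<noteq> j" "\<And>x. x \<in> A \<Longrightarrow> 0 \<le> f x"
  shows "f i + f j \<le> sum f A"
proof -
  have "sum f {i, j} \<le> sum f A"
    by (rule sum_mono2) (use assms in auto)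
  then show ?thesis using assms(4) by simp
qed

lemma sum_pair_eq:
  fixes f :: "'a \<Rightarrow> 'b::comm_monoid_add"
  assumes "finite A" "i \<in> A" "j \<in> A" "i \<noteq> j"
    and "\<And>x. x \<in> A \<Longrightarrow> x \<noteq> i \<Longrightarrow> x \<noteq> j \<Longrightarrow> f x = 0"
  shows "sum f A = f i + f j"
proof -
  have "sum f {i, j} = sum f A"
    by (rule sum.mono_neutral_left) (use assms in auto)
  then show ?thesis using assms(4) by simp
qed

definition weighted_divergence ::
    "real \<Rightarrow> nat \<Rightarrow> (nat \<Rightarrow> real) \<Rightarrow> (nat \<Rightarrow> real) \<Rightarrow> (nat \<Rightarrow> real) \<Rightarrow> real" where
  "weighted_divergence \<sigma> K w \<mu> l = (\<Sum>a=0..K. w a * gauss_kl \<sigma> (\<mu> a) (l a))"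

lemma weighted_divergence_ge_pair:
  assumes "\<And>b. b \<in> {0..K} \<Longrightarrow> 0 \<le> w b" and "a \<in> {1..K}"
  shows "w 0 * gauss_kl \<sigma> (\<mu> 0) (l 0) + w a * gauss_kl \<sigma> (\<mu> a) (l a)
           \<le> weighted_divergence \<sigma> K w \<mu> l"
  unfolding weighted_divergence_def
  by (rule sum_pair_le) (use assms in \<open>auto simp: gauss_kl_nonneg\<close>)

lemma weighted_divergence_eq_pair:
  assumes "a \<in> {1..K}" and "\<And>b. b \<in> {1..K} \<Longrightarrow> b \<noteq> a \<Longrightarrow> l b = \<mu> b"
  shows "weighted_divergence \<sigma> K w \<mu> l
           = w 0 * gauss_kl \<sigma> (\<mu> 0) (l 0) + w a * gauss_kl \<sigma> (\<mu> a) (l a)"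
  unfolding weighted_divergence_def
  by (rule sum_pair_eq) (use assms in \<open>auto simp: gauss_kl_def\<close>)

lemma mem_Alt_iff:
  "l \<in> Alt K \<mu> \<longleftrightarrow> in_L K l \<and> (\<exists>a\<in>{1..K}. (l 0 < l a) \<noteq> (\<mu> 0 < \<mu> a))"
proof -
  have "better_set K l = better_set K \<mu> \<longleftrightarrow> (\<forall>a\<in>{1..K}. (l 0 < l a) = (\<mu> 0 < \<mu> a))"
    unfolding better_set_def by blast
  then show ?thesis unfolding Alt_def by blast
qed

lemma argmax_set_eq_0_iff:
  "argmax_set K l = {0} \<longleftrightarrow> (\<forall>a\<in>{1..K}. l a < l 0)"
proof
  assume max: "argmax_set K l = {0}"
  show "\<forall>a\<in>{1..K}. l a < l 0"
  proof
    fix a assume a: "a \<in> {1..K}"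
    have "0 \<in> argmax_set K l" using max by simp
    then have "l a \<le> l 0" using a unfolding argmax_set_def by simp
    moreover have "a \<notin> argmax_set K l" using max a by auto
    ultimately show "l a < l 0"
      using \<open>0 \<in> argmax_set K l\<close> a unfolding argmax_set_def by (auto simp: le_less)
  qed
next
  assume below: "\<forall>a\<in>{1..K}. l a < l 0"
  have "l b \<le> l 0" if "b \<in> {0..K}" for b
    using below that by (cases "b = 0") (auto intro: less_imp_le)
  then have "0 \<in> argmax_set K l" unfolding argmax_set_def by simp
  moreover have "b \<notin> argmax_set K l" if "b \<noteq> 0" for b
    using below that unfolding argmax_set_def by (auto simp: not_le intro!: bexI[of _ 0])
  ultimately show "argmax_set K l = {0}" by blast
qed

lemma argmax_set_mirror:
  assumes "in_L K \<mu>"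
  shows "argmax_set K (mirror \<mu>) = {0}"
  unfolding argmax_set_eq_0_iff
proof
  fix a assume "a \<in> {1..K}"
  then have "\<mu> a \<noteq> \<mu> 0" using assms unfolding in_L_def by blast
  then show "mirror \<mu> a < mirror \<mu> 0" unfolding mirror_def by auto
qed

lemma mem_Alt_BAI_mirror_iff:
  assumes "in_L K \<mu>"
  shows "l \<in> Alt_BAI K (mirror \<mu>) \<longleftrightarrow> (\<exists>a\<in>{1..K}. l 0 \<le> l a)"
  unfolding Alt_BAI_def argmax_set_mirror[OF assms] argmax_set_eq_0_iff by (auto simp: not_less)

definition reflect_arm :: "(nat \<Rightarrow> real) \<Rightarrow> nat \<Rightarrow> real \<Rightarrow> real" where
  "reflect_arm \<mu> a x = (if \<mu> 0 < \<mu> a then 2 * \<mu> 0 - x else x)"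

lemma reflect_arm_reflect_arm [simp]: "reflect_arm \<mu> a (reflect_arm \<mu> a x) = x"
  by (simp add: reflect_arm_def)

lemma reflect_arm_le_iff:
  "reflect_arm \<mu> a x \<le> reflect_arm \<mu> a y \<longleftrightarrow> (if \<mu> 0 < \<mu> a then y \<le> x else x \<le> y)"
  by (simp add: reflect_arm_def)

lemma gauss_kl_reflect_arm [simp]:
  "gauss_kl \<sigma> (reflect_arm \<mu> a x) (reflect_arm \<mu> a y) = gauss_kl \<sigma> x y"
  by (simp add: reflect_arm_def gauss_kl_reflect)

lemma pair_divergence_mirror:
  "w 0 * gauss_kl \<sigma> (mirror \<mu> 0) (reflect_arm \<mu> a x)
     + w a * gauss_kl \<sigma> (mirror \<mu> a) (reflect_arm \<mu> a y)
     = w 0 * gauss_kl \<sigma> (\<mu> 0) x + w a * gauss_kl \<sigma> (\<mu> a) y"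
proof -
  have "mirror \<mu> 0 = reflect_arm \<mu> a (\<mu> 0)" "mirror \<mu> a = reflect_arm \<mu> a (\<mu> a)"
    unfolding mirror_def reflect_arm_def by auto
  then show ?thesis by simp
qed

lemma ex_Alt_BAI_mirror_le:
  assumes "in_L K \<mu>" and "\<And>b. b \<in> {0..K} \<Longrightarrow> 0 \<le> w b" and "lam \<in> Alt K \<mu>"
  shows "\<exists>l\<in>Alt_BAI K (mirror \<mu>).
           weighted_divergence \<sigma> K w (mirror \<mu>) l \<le> weighted_divergence \<sigma> K w \<mu> lam"
proof -
  obtain a where a: "a \<in> {1..K}" "(lam 0 < lam a) \<noteq> (\<mu> 0 < \<mu> a)"
    using assms(3) unfolding mem_Alt_iff by blast
  define l where "l b = (if b = 0 \<or> b = a then reflect_arm \<mu> a (lam b) else mirror \<mu> b)" for b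
  have "l 0 \<le> l a"
    using a(2) by (auto simp: l_def reflect_arm_le_iff)
  then have l_Alt: "l \<in> Alt_BAI K (mirror \<mu>)"
    using a(1) mem_Alt_BAI_mirror_iff[OF assms(1)] by blast
  have "weighted_divergence \<sigma> K w (mirror \<mu>) l
      = w 0 * gauss_kl \<sigma> (mirror \<mu> 0) (l 0) + w a * gauss_kl \<sigma> (mirror \<mu> a) (l a)"
    by (rule weighted_divergence_eq_pair[OF a(1)]) (simp add: l_def)
  also have "\<dots> = w 0 * gauss_kl \<sigma> (\<mu> 0) (lam 0) + w a * gauss_kl \<sigma> (\<mu> a) (lam a)"
    by (simp add: l_def pair_divergence_mirror)
  also have "\<dots> \<le> weighted_divergence \<sigma> K w \<mu> lam"
    by (rule weighted_divergence_ge_pair[OF assms(2) a(1)])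
  finally show ?thesis using l_Alt by blast
qed

lemma INF_Alt_le_pair:
  assumes a: "a \<in> {1..K}" and side: "if \<mu> 0 < \<mu> a then Y \<le> X else X \<le> Y"
  shows "(INF lam\<in>Alt K \<mu>. ereal (weighted_divergence \<sigma> K w \<mu> lam))
           \<le> ereal (w 0 * gauss_kl \<sigma> (\<mu> 0) X + w a * gauss_kl \<sigma> (\<mu> a) Y)"
proof -
  \<comment> \<open>Push the control from X away from Y by \<delta> > 0, making the comparison with arm a
    strict; only finitely many \<delta> create a tie with another arm.\<close>
  define s :: real where "s = (if \<mu> 0 < \<mu> a then 1 else -1)"
  define lam where "lam \<delta> b = (if b = 0 then X + s * \<delta> else if b = a then Y else \<mu> b)" for \<delta> b
  have a0: "a \<noteq> 0" using a by simp
  have "weighted_divergence \<sigma> K w \<mu> (lam \<delta>)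
      = w 0 * gauss_kl \<sigma> (\<mu> 0) (X + s * \<delta>) + w a * gauss_kl \<sigma> (\<mu> a) Y" for \<delta>
    using weighted_divergence_eq_pair[OF a, of "lam \<delta>" \<mu> \<sigma> w] a0 by (simp add: lam_def)
  moreover have "((\<lambda>\<delta>. X + s * \<delta>) \<longlongrightarrow> X) (at_right 0)"
    by (intro tendsto_eq_intros) auto
  ultimately have lim: "((\<lambda>\<delta>. ereal (weighted_divergence \<sigma> K w \<mu> (lam \<delta>)))
      \<longlongrightarrow> ereal (w 0 * gauss_kl \<sigma> (\<mu> 0) X + w a * gauss_kl \<sigma> (\<mu> a) Y)) (at_right 0)"
    by (auto intro!: tendsto_intros tendsto_gauss_kl)
  have "\<forall>\<^sub>F \<delta> in at_right 0. \<forall>b\<in>{1..K}. \<delta> \<noteq> s * (\<mu> b - X)"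
    by (intro eventually_ball_finite ballI eventually_neq_at_within) simp
  then have "\<forall>\<^sub>F \<delta> in at_right 0. lam \<delta> \<in> Alt K \<mu>"
    using eventually_at_right_less[of 0]
  proof eventually_elim
    case (elim \<delta>)
    have s2: "s * s = 1" by (simp add: s_def)
    have flipped: "(X + s * \<delta> < Y) \<noteq> (\<mu> 0 < \<mu> a)"
      using side \<open>0 < \<delta>\<close> by (auto simp: s_def)
    have "\<mu> b \<noteq> X + s * \<delta>" if "b \<in> {1..K}" for b
    proof
      assume "\<mu> b = X + s * \<delta>"
      then have "\<mu> b - X = s * \<delta>" by linarith
      then have "s * (\<mu> b - X) = \<delta>" using s2 by (metis mult.assoc mult_1)
      with elim(1) that show False by auto
    qed
    moreover have "Y \<noteq> X + s * \<delta>" using side \<open>0 < \<delta>\<close> by (auto simp: s_def)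
    ultimately have "in_L K (lam \<delta>)" by (auto simp: in_L_def lam_def)
    then show ?case
      using a a0 flipped unfolding mem_Alt_iff by (auto simp: lam_def)
  qed
  then have "\<forall>\<^sub>F \<delta> in at_right 0.
      (INF lam\<in>Alt K \<mu>. ereal (weighted_divergence \<sigma> K w \<mu> lam))
        \<le> ereal (weighted_divergence \<sigma> K w \<mu> (lam \<delta>))"
    by eventually_elim (rule INF_lower)
  with lim show ?thesis by (rule tendsto_lowerbound) simp
qed

lemma INF_Alt_le_Alt_BAI_mirror:
  assumes "in_L K \<mu>" and "\<And>b. b \<in> {0..K} \<Longrightarrow> 0 \<le> w b" and "l \<in> Alt_BAI K (mirror \<mu>)"
  shows "(INF lam\<in>Alt K \<mu>. ereal (weighted_divergence \<sigma> K w \<mu> lam))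
           \<le> ereal (weighted_divergence \<sigma> K w (mirror \<mu>) l)"
proof -
  obtain a where a: "a \<in> {1..K}" "l 0 \<le> l a"
    using assms(3) mem_Alt_BAI_mirror_iff[OF assms(1)] by blast
  define X Y where "X = reflect_arm \<mu> a (l 0)" and "Y = reflect_arm \<mu> a (l a)"
  have "if \<mu> 0 < \<mu> a then Y \<le> X else X \<le> Y"
    using a(2) reflect_arm_le_iff[of \<mu> a X Y] by (simp add: X_def Y_def)
  then have "(INF lam\<in>Alt K \<mu>. ereal (weighted_divergence \<sigma> K w \<mu> lam))
      \<le> ereal (w 0 * gauss_kl \<sigma> (\<mu> 0) X + w a * gauss_kl \<sigma> (\<mu> a) Y)"
    by (rule INF_Alt_le_pair[OF a(1)])
  also have "w 0 * gauss_kl \<sigma> (\<mu> 0) X + w a * gauss_kl \<sigma> (\<mu> a) Y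
      = w 0 * gauss_kl \<sigma> (mirror \<mu> 0) (l 0) + w a * gauss_kl \<sigma> (mirror \<mu> a) (l a)"
    using pair_divergence_mirror[of w \<sigma> \<mu> a X Y] by (simp add: X_def Y_def)
  also have "\<dots> \<le> weighted_divergence \<sigma> K w (mirror \<mu>) l"
    by (rule weighted_divergence_ge_pair[OF assms(2) a(1)])
  finally show ?thesis by simp
qed

lemma INF_Alt_eq_INF_Alt_BAI_mirror:
  assumes "in_L K \<mu>" and "\<And>b. b \<in> {0..K} \<Longrightarrow> 0 \<le> w b"
  shows "(INF lam\<in>Alt K \<mu>. ereal (weighted_divergence \<sigma> K w \<mu> lam))
           = (INF l\<in>Alt_BAI K (mirror \<mu>). ereal (weighted_divergence \<sigma> K w (mirror \<mu>) l))"
proof (rule antisym)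
  show "(INF lam\<in>Alt K \<mu>. ereal (weighted_divergence \<sigma> K w \<mu> lam))
      \<le> (INF l\<in>Alt_BAI K (mirror \<mu>). ereal (weighted_divergence \<sigma> K w (mirror \<mu>) l))"
    by (rule INF_greatest) (rule INF_Alt_le_Alt_BAI_mirror[OF assms])
  show "(INF l\<in>Alt_BAI K (mirror \<mu>). ereal (weighted_divergence \<sigma> K w (mirror \<mu>) l))
      \<le> (INF lam\<in>Alt K \<mu>. ereal (weighted_divergence \<sigma> K w \<mu> lam))"
    by (rule INF_mono) (use ex_Alt_BAI_mirror_le[OF assms] in auto)
qed

theorem lemma1:
  fixes K :: nat and \<sigma> :: real and \<mu> :: "nat \<Rightarrow> real"
  assumes "\<sigma> > 0" and "in_L K \<mu>"
  shows "T_star \<sigma> K \<mu> = T_star_BAI \<sigma> K (mirror \<mu>)"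
proof -
  have "(INF l\<in>Alt K \<mu>. ereal (\<Sum>a=0..K. w a * gauss_kl \<sigma> (\<mu> a) (l a)))
      = (INF l\<in>Alt_BAI K (mirror \<mu>). ereal (\<Sum>a=0..K. w a * gauss_kl \<sigma> (mirror \<mu> a) (l a)))"
    if "w \<in> prob_simplex K" for w
    using INF_Alt_eq_INF_Alt_BAI_mirror[OF assms(2), of w \<sigma>] that
    unfolding prob_simplex_def weighted_divergence_def by blast
  then show ?thesis unfolding T_star_def T_star_BAI_def by (simp cong: SUP_cong)
qed

end
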